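(* Let $(A_i)_{i\in I}$ be any family of finite partially ordered sets, each having a least element $0_i$ and a greatest element $1_i$, and let $A=\prod_{i\in I}A_i$ with the componentwise partial order $\preccurlyeq$. Let $W$ be the set of all up-sets $x$ of $A$ such that, for some natural number $n$ and distinct indices $i_0,\dots,i_{n-1}\in I$, $x$ is the inverse image, under the projection of $A$ onto $A_{i_0}\times\dots\times A_{i_{n-1}}$, of an up-set of that (componentwise ordered) finite product. Then $(A,W)$ is a Pratt comonoid.
   Context: An up-set of a poset $P$ is a subset $x$ with $a\in x$, $a\preccurlyeq b$ implying $b\in x$. A Pratt comonoid is a pair $(A,W)$ where $A$ is a set and $W$ is a set of subsets of $A$ such that (i) $\emptyset\in W$ and $A\in W$; (ii) whenever $C\subseteq A\times A$ is such that for every $a\in A$ both the $a$-th row $\{b\mid (a,b)\in C\}$ and the $a$-th column $\{b\mid (b,a)\in C\}$ belong to $W$ (a crossword over $W$), the diagonal $\{b\mid (b,b)\in C\}$ also belongs to $W$. *)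

theory Defs
  imports "HOL-Library.FuncSet"
begin

definition partial_order_on :: "'b set \<Rightarrow> ('b \<Rightarrow> 'b \<Rightarrow> bool) \<Rightarrow> bool" where
  "partial_order_on P le \<longleftrightarrow>
     (\<forall>a\<in>P. le a a) \<and>
     (\<forall>a\<in>P. \<forall>b\<in>P. le a b \<and> le b a \<longrightarrow> a = b) \<and>
     (\<forall>a\<in>P. \<forall>b\<in>P. \<forall>c\<in>P. le a b \<and> le b c \<longrightarrow> le a c)"

definition up_set :: "'b set \<Rightarrow> ('b \<Rightarrow> 'b \<Rightarrow> bool) \<Rightarrow> 'b set \<Rightarrow> bool" where
  "up_set P le x \<longleftrightarrow> x \<subseteq> P \<and> (\<forall>a\<in>x. \<forall>b\<in>P. le a b \<longrightarrow> b \<in> x)"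

definition prod_le :: "'i set \<Rightarrow> ('i \<Rightarrow> 'a \<Rightarrow> 'a \<Rightarrow> bool) \<Rightarrow> ('i \<Rightarrow> 'a) \<Rightarrow> ('i \<Rightarrow> 'a) \<Rightarrow> bool" where
  "prod_le J le f g \<longleftrightarrow> (\<forall>i\<in>J. le i (f i) (g i))"

definition crossword :: "'b set \<Rightarrow> 'b set set \<Rightarrow> ('b \<times> 'b) set \<Rightarrow> bool" where
  "crossword A W C \<longleftrightarrow> C \<subseteq> A \<times> A \<and>
     (\<forall>a\<in>A. {b. (a, b) \<in> C} \<in> W \<and> {b. (b, a) \<in> C} \<in> W)"

definition pratt_comonoid :: "'b set \<Rightarrow> 'b set set \<Rightarrow> bool" where
  "pratt_comonoid A W \<longleftrightarrow> W \<subseteq> Pow A \<and> {} \<in> W \<and> A \<in> W \<and>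
     (\<forall>C. crossword A W C \<longrightarrow> {b. (b, b) \<in> C} \<in> W)"

end

theory Submission
  imports Defs "HOL-Analysis.Function_Topology"
begin

text \<open>
  Let \<open>W\<close> be the up-sets of \<open>A = \<Prod>\<^sub>i A\<^sub>i\<close> that depend on finitely many coordinates,
  and \<open>D\<close> the diagonal of a crossword \<open>C\<close> over \<open>W\<close>. \<open>D\<close> is an up-set: from \<open>(b, b) \<in> C\<close>
  and \<open>b \<preceq> c\<close>, the row of \<open>b\<close> gives \<open>(b, c) \<in> C\<close> and then the column of \<open>c\<close> gives
  \<open>(c, c) \<in> C\<close>. \<open>D\<close> is locally determined: if \<open>(b, b) \<in> C\<close>, the row of \<open>b\<close> depends on
  finitely many coordinates \<open>J\<close>, so it contains the point \<open>m\<close> equal to \<open>b\<close> on \<open>J\<close> and to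
  the bottom element elsewhere; the column of \<open>m\<close> depends on coordinates \<open>J'\<close> and so
  contains the analogous point \<open>m'\<close>. Every \<open>c\<close> agreeing with \<open>b\<close> on \<open>J \<union> J'\<close> lies above
  \<open>m\<close> and \<open>m'\<close>, whence \<open>(m', c) \<in> C\<close> and \<open>(c, c) \<in> C\<close>. The case \<open>(b, b) \<notin> C\<close> is the
  same argument for the complement of \<open>C\<close> and the reversed order, using top elements.
  Finally, \<open>A\<close> is compact as a product of finite discrete spaces, so finitely many of the
  open cylinders on which \<open>D\<close> is constant cover \<open>A\<close>, and \<open>D\<close> depends only on the union of
  their coordinate sets.
\<close>

definition determined_by :: "('i \<Rightarrow> 'a) set \<Rightarrow> 'i set \<Rightarrow> ('i \<Rightarrow> 'a) set \<Rightarrow> bool" where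
  "determined_by A J x \<longleftrightarrow> (\<forall>c\<in>A. \<forall>c'\<in>A. (\<forall>i\<in>J. c i = c' i) \<longrightarrow> c \<in> x \<longrightarrow> c' \<in> x)"

definition finitary_up_sets ::
    "'i set \<Rightarrow> ('i \<Rightarrow> 'a set) \<Rightarrow> ('i \<Rightarrow> 'a \<Rightarrow> 'a \<Rightarrow> bool) \<Rightarrow> ('i \<Rightarrow> 'a) set set" where
  "finitary_up_sets I S le = {x. up_set (PiE I S) (prod_le I le) x \<and>
     (\<exists>J. finite J \<and> J \<subseteq> I \<and> determined_by (PiE I S) J x)}"

lemma determined_by_preimage_restrict:
  "determined_by (PiE I S) J {a \<in> PiE I S. restrict a J \<in> U}"
  unfolding determined_by_def
proof (intro ballI impI)
  fix c c' assume "c \<in> PiE I S" "c' \<in> PiE I S" "\<forall>i\<in>J. c i = c' i"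
    and "c \<in> {a \<in> PiE I S. restrict a J \<in> U}"
  then show "c' \<in> {a \<in> PiE I S. restrict a J \<in> U}"
    using restrict_ext[of J c c'] by simp
qed

lemma determined_by_eq_preimage_restrict:
  assumes "determined_by (PiE I S) J x" and x_sub: "x \<subseteq> PiE I S"
  shows "x = {a \<in> PiE I S. restrict a J \<in> (\<lambda>a. restrict a J) ` x}"
proof (intro equalityI subsetI)
  fix a assume a: "a \<in> {a \<in> PiE I S. restrict a J \<in> (\<lambda>a. restrict a J) ` x}"
  then obtain d where "d \<in> x" "restrict d J = restrict a J"
    by auto
  then have "\<forall>i\<in>J. d i = a i"
    by (metis restrict_apply')
  with assms(1) a \<open>d \<in> x\<close> x_sub show "a \<in> x"
    unfolding determined_by_def by blast
qed (use x_sub in auto)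

lemma up_set_image_restrict:
  assumes reflexive: "\<forall>i\<in>I. \<forall>a\<in>S i. le i a a"
    and "J \<subseteq> I" and up: "up_set (PiE I S) (prod_le I le) x"
  shows "up_set (PiE J S) (prod_le J le) ((\<lambda>a. restrict a J) ` x)"
  unfolding up_set_def
proof (intro conjI ballI impI)
  have x_sub: "x \<subseteq> PiE I S"
    using up by (simp add: up_set_def)
  have "restrict a J \<in> PiE J S" if "a \<in> x" for a
    using x_sub[THEN subsetD, OF that] \<open>J \<subseteq> I\<close> by (auto simp: PiE_iff)
  then show "(\<lambda>a. restrict a J) ` x \<subseteq> PiE J S"
    by blast
  fix u v assume "u \<in> (\<lambda>a. restrict a J) ` x" "v \<in> PiE J S" "prod_le J le u v"
  then obtain a where a: "a \<in> x" "prod_le J le (restrict a J) v"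
    by auto
  define a' where "a' = (\<lambda>i. if i \<in> J then v i else a i)"
  have "a \<in> PiE I S"
    using a(1) x_sub by blast
  then have "a' \<in> PiE I S"
    using \<open>v \<in> PiE J S\<close> \<open>J \<subseteq> I\<close> by (auto simp: a'_def PiE_iff extensional_def)
  moreover have "prod_le I le a a'"
    using a(2) reflexive \<open>a \<in> PiE I S\<close> by (auto simp: prod_le_def a'_def PiE_iff)
  ultimately have "a' \<in> x"
    using up a(1) by (simp add: up_set_def)
  moreover have "restrict a' J = v"
    using \<open>v \<in> PiE J S\<close> by (auto simp: a'_def fun_eq_iff PiE_iff extensional_def)
  ultimately show "v \<in> (\<lambda>a. restrict a J) ` x"
    by blast
qed

lemma finitary_up_sets_eq:
  assumes reflexive: "\<forall>i\<in>I. \<forall>a\<in>S i. le i a a"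
  shows "finitary_up_sets I S le = {x. up_set (PiE I S) (prod_le I le) x \<and>
           (\<exists>J U. finite J \<and> J \<subseteq> I \<and> up_set (PiE J S) (prod_le J le) U \<and>
                  x = {a \<in> PiE I S. restrict a J \<in> U})}" (is "_ = ?W")
proof (rule set_eqI)
  fix x
  show "x \<in> finitary_up_sets I S le \<longleftrightarrow> x \<in> ?W"
  proof
    assume "x \<in> finitary_up_sets I S le"
    then obtain J where up: "up_set (PiE I S) (prod_le I le) x"
      and J: "finite J" "J \<subseteq> I" "determined_by (PiE I S) J x"
      unfolding finitary_up_sets_def by blast
    moreover have "x = {a \<in> PiE I S. restrict a J \<in> (\<lambda>a. restrict a J) ` x}"
      using up unfolding up_set_def by (intro determined_by_eq_preimage_restrict[OF J(3)]) blast
    ultimately show "x \<in> ?W"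
      using up_set_image_restrict[OF reflexive J(2) up] by blast
  next
    assume "x \<in> ?W"
    then obtain J U where "up_set (PiE I S) (prod_le I le) x" "finite J" "J \<subseteq> I"
      and "x = {a \<in> PiE I S. restrict a J \<in> U}"
      by blast
    then show "x \<in> finitary_up_sets I S le"
      unfolding finitary_up_sets_def using determined_by_preimage_restrict by blast
  qed
qed

lemma crossword_diagonal_up_set:
  assumes "crossword A W C" and "\<And>x. x \<in> W \<Longrightarrow> up_set A le x"
  shows "up_set A le {b. (b, b) \<in> C}"
  unfolding up_set_def
proof (intro conjI ballI impI)
  show "{b. (b, b) \<in> C} \<subseteq> A"
    using assms(1) by (auto simp: crossword_def)
  fix b c assume b: "b \<in> {b. (b, b) \<in> C}" and c: "c \<in> A" "le b c"
  have "b \<in> A"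
    using b assms(1) by (auto simp: crossword_def)
  then have "(b, c) \<in> C"
    using assms b c unfolding crossword_def up_set_def by blast
  then show "c \<in> {b. (b, b) \<in> C}"
    using assms c unfolding crossword_def up_set_def by blast
qed

lemma crossword_complement:
  assumes "crossword A W C" and "\<And>x. x \<in> W \<Longrightarrow> A - x \<in> W'"
  shows "crossword A W' (A \<times> A - C)"
proof -
  have "{b. (a, b) \<in> A \<times> A - C} = A - {b. (a, b) \<in> C}"
    and "{b. (b, a) \<in> A \<times> A - C} = A - {b. (b, a) \<in> C}" if "a \<in> A" for a
    using that by auto
  with assms show ?thesis
    unfolding crossword_def by auto
qed

lemma finitary_up_sets_upD:
  "x \<in> finitary_up_sets I S le \<Longrightarrow> a \<in> x \<Longrightarrow> c \<in> PiE I S \<Longrightarrow> prod_le I le a c \<Longrightarrow> c \<in> x"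
  unfolding finitary_up_sets_def up_set_def by blast

lemma finitary_up_sets_determined_by:
  assumes "x \<in> finitary_up_sets I S le"
  obtains J where "finite J" "J \<subseteq> I" "determined_by (PiE I S) J x"
  using assms unfolding finitary_up_sets_def by blast

lemma up_set_Diff_converse: "up_set P le x \<Longrightarrow> up_set P (\<lambda>a b. le b a) (P - x)"
  unfolding up_set_def by blast

lemma determined_by_Diff:
  assumes "determined_by A J x"
  shows "determined_by A J (A - x)"
  unfolding determined_by_def
proof (intro ballI impI)
  fix c c' assume "c \<in> A" "c' \<in> A" "\<forall>i\<in>J. c i = c' i" "c \<in> A - x"
  then show "c' \<in> A - x"
    using assms[unfolded determined_by_def, rule_format, of c' c] by auto
qed

lemma finitary_up_sets_Diff:
  assumes "x \<in> finitary_up_sets I S le"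
  shows "PiE I S - x \<in> finitary_up_sets I S (\<lambda>i a b. le i b a)"
proof -
  obtain J where J: "finite J" "J \<subseteq> I" "determined_by (PiE I S) J x"
    and up: "up_set (PiE I S) (prod_le I le) x"
    using assms unfolding finitary_up_sets_def by blast
  have "up_set (PiE I S) (prod_le I (\<lambda>i a b. le i b a)) (PiE I S - x)"
    using up_set_Diff_converse[OF up] by (simp add: prod_le_def[abs_def])
  moreover have "determined_by (PiE I S) J (PiE I S - x)"
    using J(3) by (rule determined_by_Diff)
  ultimately show ?thesis
    using J(1,2) unfolding finitary_up_sets_def by blast
qed

lemma PiE_least_element:
  assumes "\<And>i. i \<in> I \<Longrightarrow> \<exists>z\<in>S i. \<forall>a\<in>S i. le i z a"
  shows "\<exists>z\<in>PiE I S. \<forall>a\<in>PiE I S. prod_le I le z a"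
proof -
  obtain z where "\<forall>i\<in>I. z i \<in> S i \<and> (\<forall>a\<in>S i. le i (z i) a)"
    using bchoice[of I "\<lambda>i z. z \<in> S i \<and> (\<forall>a\<in>S i. le i z a)"] assms by blast
  then show ?thesis
    by (intro bexI[of _ "restrict z I"]) (auto simp: prod_le_def PiE_iff)
qed

lemma crossword_diagonal_contains_cylinder:
  assumes reflexive: "\<forall>i\<in>I. \<forall>a\<in>S i. le i a a"
    and z: "z \<in> PiE I S" "\<forall>a\<in>PiE I S. prod_le I le z a"
    and C: "crossword (PiE I S) (finitary_up_sets I S le) C"
    and b: "b \<in> PiE I S" "(b, b) \<in> C"
  shows "\<exists>F. finite F \<and> F \<subseteq> I \<and> (\<forall>c\<in>PiE I S. (\<forall>i\<in>F. c i = b i) \<longrightarrow> (c, c) \<in> C)"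
proof -
  define m where "m F = (\<lambda>i. if i \<in> F then b i else z i)" for F
  have m_in: "m F \<in> PiE I S" for F
    using b(1) z(1) by (auto simp: m_def PiE_iff extensional_def)
  have m_le: "prod_le I le (m F) c" if "c \<in> PiE I S" "\<forall>i\<in>F. c i = b i" for F c
    using that reflexive z(2) by (auto simp: m_def prod_le_def PiE_iff)
  have row: "{c. (a, c) \<in> C} \<in> finitary_up_sets I S le"
    and col: "{c. (c, a) \<in> C} \<in> finitary_up_sets I S le" if "a \<in> PiE I S" for a
    using C that unfolding crossword_def by blast+
  obtain J where J: "finite J" "J \<subseteq> I" "determined_by (PiE I S) J {c. (b, c) \<in> C}"
    using row[OF b(1)] by (rule finitary_up_sets_determined_by)
  have "(b, m J) \<in> C"
    using J(3) b m_in unfolding determined_by_def by (auto simp: m_def)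
  obtain J' where J': "finite J'" "J' \<subseteq> I" "determined_by (PiE I S) J' {c. (c, m J) \<in> C}"
    using col[OF m_in] by (rule finitary_up_sets_determined_by)
  have "(m J', m J) \<in> C"
    using J'(3) b \<open>(b, m J) \<in> C\<close> m_in unfolding determined_by_def by (auto simp: m_def)
  have "(c, c) \<in> C" if c: "c \<in> PiE I S" "\<forall>i\<in>J \<union> J'. c i = b i" for c
  proof -
    have "prod_le I le (m J) c" "prod_le I le (m J') c"
      using m_le c by auto
    then have "(m J', c) \<in> C"
      using finitary_up_sets_upD[OF row[OF m_in[of J']], where a="m J" and c=c]
        \<open>(m J', m J) \<in> C\<close> c(1) by auto
    then show ?thesis
      using finitary_up_sets_upD[OF col[OF c(1)], where a="m J'" and c=c]
        \<open>prod_le I le (m J') c\<close> c(1) by auto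
  qed
  then show ?thesis
    using J J' by (intro exI[of _ "J \<union> J'"]) auto
qed

lemma crossword_diagonal_locally_determined:
  assumes reflexive: "\<forall>i\<in>I. \<forall>a\<in>S i. le i a a"
    and bot: "\<And>i. i \<in> I \<Longrightarrow> \<exists>z\<in>S i. \<forall>a\<in>S i. le i z a"
    and top: "\<And>i. i \<in> I \<Longrightarrow> \<exists>t\<in>S i. \<forall>a\<in>S i. le i a t"
    and C: "crossword (PiE I S) (finitary_up_sets I S le) C"
    and b: "b \<in> PiE I S"
  shows "\<exists>F. finite F \<and> F \<subseteq> I \<and>
           (\<forall>c\<in>PiE I S. (\<forall>i\<in>F. c i = b i) \<longrightarrow> ((c, c) \<in> C \<longleftrightarrow> (b, b) \<in> C))"
proof (cases "(b, b) \<in> C")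
  case True
  from PiE_least_element[OF bot] obtain z
    where z: "z \<in> PiE I S" "\<forall>a\<in>PiE I S. prod_le I le z a" ..
  from crossword_diagonal_contains_cylinder[OF reflexive z C b True]
  obtain F where "finite F" "F \<subseteq> I"
    and "\<forall>c\<in>PiE I S. (\<forall>i\<in>F. c i = b i) \<longrightarrow> (c, c) \<in> C"
    by auto
  with True show ?thesis
    by blast
next
  case False
  let ?ge = "\<lambda>i a b. le i b a"
  from PiE_least_element[of I S ?ge, OF top] obtain t
    where t: "t \<in> PiE I S" "\<forall>a\<in>PiE I S. prod_le I ?ge t a" ..
  have C': "crossword (PiE I S) (finitary_up_sets I S ?ge) (PiE I S \<times> PiE I S - C)"
    using C finitary_up_sets_Diff by (rule crossword_complement)
  have "(b, b) \<in> PiE I S \<times> PiE I S - C"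
    using b False by blast
  from crossword_diagonal_contains_cylinder[of I S ?ge, OF reflexive t C' b this]
  obtain F where "finite F" "F \<subseteq> I"
    and "\<forall>c\<in>PiE I S. (\<forall>i\<in>F. c i = b i) \<longrightarrow> (c, c) \<in> PiE I S \<times> PiE I S - C"
    by auto
  with False show ?thesis
    by blast
qed

lemma finite_cylinder_subcover:
  assumes "\<And>i. i \<in> I \<Longrightarrow> finite (S i)"
    and F_fin: "\<And>b. b \<in> PiE I S \<Longrightarrow> finite (F b)"
    and F_sub: "\<And>b. b \<in> PiE I S \<Longrightarrow> F b \<subseteq> I"
  obtains T where "finite T" "T \<subseteq> PiE I S"
    "PiE I S \<subseteq> (\<Union>b\<in>T. {c \<in> PiE I S. \<forall>i\<in>F b. c i = b i})"
proof -
  define X where "X = product_topology (\<lambda>i. discrete_topology (S i)) I"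
  define N where "N b = PiE I (\<lambda>i. if i \<in> F b then {b i} else S i)" for b
  have N_eq: "N b = {c \<in> PiE I S. \<forall>i\<in>F b. c i = b i}" if "b \<in> PiE I S" for b
    using that F_sub[OF that] by (auto simp: N_def PiE_iff extensional_def split: if_splits)
  have "openin X (N b)" if "b \<in> PiE I S" for b
  proof -
    have "{i \<in> I. (if i \<in> F b then {b i} else S i) \<noteq> topspace (discrete_topology (S i))} \<subseteq> F b"
      by auto
    then have "finite {i \<in> I. (if i \<in> F b then {b i} else S i) \<noteq> topspace (discrete_topology (S i))}"
      using F_fin[OF that] finite_subset by blast
    moreover have "\<forall>i\<in>I. openin (discrete_topology (S i)) (if i \<in> F b then {b i} else S i)"
      using that by (auto simp: PiE_iff)
    ultimately show ?thesis
      unfolding X_def N_def by (simp add: openin_PiE_gen)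
  qed
  moreover have "compact_space X"
    using assms(1) by (simp add: X_def compact_space_product_topology compact_space_discrete_topology)
  moreover have "topspace X \<subseteq> \<Union>(N ` PiE I S)"
    using N_eq by (auto simp: X_def)
  ultimately obtain \<F> where "finite \<F>" "\<F> \<subseteq> N ` PiE I S" "topspace X \<subseteq> \<Union>\<F>"
    unfolding compact_space_alt by (metis (no_types, lifting) imageE)
  then obtain T where T: "finite T" "T \<subseteq> PiE I S" "topspace X \<subseteq> \<Union>(N ` T)"
    by (metis finite_subset_image)
  moreover have "N ` T = (\<lambda>b. {c \<in> PiE I S. \<forall>i\<in>F b. c i = b i}) ` T"
    using N_eq T(2) by (intro image_cong) auto
  ultimately show thesis
    using that by (simp add: X_def)
qed

lemma locally_determined_imp_determined_by:
  assumes "\<And>i. i \<in> I \<Longrightarrow> finite (S i)"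
    and local: "\<And>b. b \<in> PiE I S \<Longrightarrow> \<exists>F. finite F \<and> F \<subseteq> I \<and>
                  (\<forall>c\<in>PiE I S. (\<forall>i\<in>F. c i = b i) \<longrightarrow> (c \<in> x \<longleftrightarrow> b \<in> x))"
  obtains K where "finite K" "K \<subseteq> I" "determined_by (PiE I S) K x"
proof -
  have "\<forall>b\<in>PiE I S. \<exists>F. finite F \<and> F \<subseteq> I \<and>
      (\<forall>c\<in>PiE I S. (\<forall>i\<in>F. c i = b i) \<longrightarrow> (c \<in> x \<longleftrightarrow> b \<in> x))"
    by (intro ballI) (rule local)
  from bchoice[OF this] obtain F where F: "\<forall>b\<in>PiE I S. finite (F b) \<and> F b \<subseteq> I \<and>
      (\<forall>c\<in>PiE I S. (\<forall>i\<in>F b. c i = b i) \<longrightarrow> (c \<in> x \<longleftrightarrow> b \<in> x))"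
    by (elim exE)
  then have F_fin: "\<And>b. b \<in> PiE I S \<Longrightarrow> finite (F b)"
    and F_sub: "\<And>b. b \<in> PiE I S \<Longrightarrow> F b \<subseteq> I"
    and F_det: "\<And>b c. b \<in> PiE I S \<Longrightarrow> c \<in> PiE I S \<Longrightarrow> \<forall>i\<in>F b. c i = b i \<Longrightarrow> c \<in> x \<longleftrightarrow> b \<in> x"
    by blast+
  obtain T where T: "finite T" "T \<subseteq> PiE I S"
      "PiE I S \<subseteq> (\<Union>b\<in>T. {c \<in> PiE I S. \<forall>i\<in>F b. c i = b i})"
    using finite_cylinder_subcover[of I S F, OF assms(1) F_fin F_sub] by blast
  have "determined_by (PiE I S) (\<Union>(F ` T)) x"
    unfolding determined_by_def
  proof (intro ballI impI)
    fix c c' assume c: "c \<in> PiE I S" "c' \<in> PiE I S" "\<forall>i\<in>\<Union>(F ` T). c i = c' i" "c \<in> x"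
    then obtain b where b: "b \<in> T" "\<forall>i\<in>F b. c i = b i"
      using T(3) by blast
    with c(3) have "\<forall>i\<in>F b. c' i = b i"
      by auto
    then show "c' \<in> x"
      using F_det[of b c] F_det[of b c'] b c T(2) by blast
  qed
  moreover have "finite (\<Union>(F ` T))"
    using T(1,2) F_fin by auto
  moreover have "\<Union>(F ` T) \<subseteq> I"
    using T(2) F_sub by blast
  ultimately show thesis
    using that by blast
qed

lemma crossword_diagonal_in_finitary_up_sets:
  assumes fin: "\<And>i. i \<in> I \<Longrightarrow> finite (S i)"
    and reflexive: "\<forall>i\<in>I. \<forall>a\<in>S i. le i a a"
    and bot: "\<And>i. i \<in> I \<Longrightarrow> \<exists>z\<in>S i. \<forall>a\<in>S i. le i z a"
    and top: "\<And>i. i \<in> I \<Longrightarrow> \<exists>t\<in>S i. \<forall>a\<in>S i. le i a t"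
    and C: "crossword (PiE I S) (finitary_up_sets I S le) C"
  shows "{b. (b, b) \<in> C} \<in> finitary_up_sets I S le"
proof -
  have diagonal_local: "\<exists>F. finite F \<and> F \<subseteq> I \<and>
      (\<forall>c\<in>PiE I S. (\<forall>i\<in>F. c i = b i) \<longrightarrow> (c \<in> {b. (b, b) \<in> C} \<longleftrightarrow> b \<in> {b. (b, b) \<in> C}))"
    if "b \<in> PiE I S" for b
    using crossword_diagonal_locally_determined[OF reflexive bot top C that] by simp
  have "up_set (PiE I S) (prod_le I le) {b. (b, b) \<in> C}"
    using C by (rule crossword_diagonal_up_set) (simp add: finitary_up_sets_def)
  moreover obtain K where "finite K" "K \<subseteq> I" "determined_by (PiE I S) K {b. (b, b) \<in> C}"
    using fin diagonal_local by (rule locally_determined_imp_determined_by)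
  ultimately show ?thesis
    unfolding finitary_up_sets_def by blast
qed

theorem theorem9p2:
  fixes I :: "'i set" and S :: "'i \<Rightarrow> 'a set" and le :: "'i \<Rightarrow> 'a \<Rightarrow> 'a \<Rightarrow> bool"
    and W :: "('i \<Rightarrow> 'a) set set"
  assumes fin: "\<And>i. i \<in> I \<Longrightarrow> finite (S i)"
    and po: "\<And>i. i \<in> I \<Longrightarrow> partial_order_on (S i) (le i)"
    and bot: "\<And>i. i \<in> I \<Longrightarrow> \<exists>z\<in>S i. \<forall>a\<in>S i. le i z a"
    and top: "\<And>i. i \<in> I \<Longrightarrow> \<exists>t\<in>S i. \<forall>a\<in>S i. le i a t"
    and W_def: "W = {x. up_set (PiE I S) (prod_le I le) x \<and>
                   (\<exists>J U. finite J \<and> J \<subseteq> I \<and> up_set (PiE J S) (prod_le J le) U \<and>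
                          x = {a \<in> PiE I S. restrict a J \<in> U})}"
  shows "pratt_comonoid (PiE I S) W"
proof -
  have reflexive: "\<forall>i\<in>I. \<forall>a\<in>S i. le i a a"
    using po unfolding partial_order_on_def by blast
  have W_eq: "W = finitary_up_sets I S le"
    unfolding W_def finitary_up_sets_eq[of I S le, OF reflexive] ..
  have "{} \<in> W" "PiE I S \<in> W"
    unfolding W_eq finitary_up_sets_def up_set_def determined_by_def
    by (auto intro!: exI[of _ "{}"])
  moreover have "{b. (b, b) \<in> C} \<in> W" if "crossword (PiE I S) W C" for C
    using fin reflexive bot top that unfolding W_eq by (rule crossword_diagonal_in_finitary_up_sets)
  moreover have "W \<subseteq> Pow (PiE I S)"
    unfolding W_def up_set_def by blast
  ultimately show ?thesis
    unfolding pratt_comonoid_def by blast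
qed

end
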